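(* Let $q$ be a prime power and $n \ge 2$ an integer. For any $\epsilon_1, \epsilon_2 > 0$ there is a constant $C = C(\epsilon_1,\epsilon_2,n,q)$ such that, if an $n$-tuple $(T_1,\ldots,T_n)$ of positive integers satisfies $T_1\cdots T_n > C$, then choosing a periodic sequence $s:\mathbb{N}_0^n \to \mathbb{F}_q$ of period $(T_1,\ldots,T_n)$ with each such sequence having equal probability $1/q^{T_1\cdots T_n}$, we have $$\mathcal{P}\left( L(s) > \sqrt{(1-\epsilon_1) T_1\cdots T_n/(n-1)} \right) > 1 - \epsilon_2.$$
   Context: An $n$-dimensional sequence over $\mathbb{F}_q$ is a map $s:\mathbb{N}_0^n \to \mathbb{F}_q$. A polynomial $P(\mathbf{X}) = \sum_{\mathbf{j}} a_{\mathbf{j}} X_1^{j_1}\cdots X_n^{j_n} \in \mathbb{F}_q[X_1,\ldots,X_n]$ acts on $s$ by $(Ps)(\mathbf{m}) = \sum_{\mathbf{j}} a_{\mathbf{j}} s(\mathbf{m}+\mathbf{j})$. Let $I(s) = \{P : Ps = 0\}$, an ideal. The linear complexity $L(s)$ is the dimension of $\mathbb{F}_q[X_1,\ldots,X_n]/I(s)$ over $\mathbb{F}_q$. The sequence $s$ is periodic with period $(T_1,\ldots,T_n)$ if $X_i^{T_i}-1 \in I(s)$ for all $i$, i.e. $s(\mathbf{m}+T_i\mathbf{e}_i)=s(\mathbf{m})$ for all $\mathbf{m}$ and $i$; such a sequence is determined by its values on $\{(m_1,\ldots,m_n): 0 \le m_i \le T_i-1\}$, so there are $q^{T_1\cdots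 T_n}$ of them. *)

theory Defs
  imports Complex_Main "HOL-Library.Cardinality"
begin

text \<open>An n-dimensional sequence over a field: indices are exponent vectors
  'n \<Rightarrow> nat (the finite type 'n indexes the n coordinates).
  A polynomial in n variables is represented by its coefficient function on
  exponent vectors, required to have finite support.\<close>

definition is_poly :: "(('n \<Rightarrow> nat) \<Rightarrow> 'a::zero) \<Rightarrow> bool" where
  "is_poly P \<longleftrightarrow> finite {j. P j \<noteq> 0}"

definition poly_act :: "(('n \<Rightarrow> nat) \<Rightarrow> 'a::field) \<Rightarrow> (('n \<Rightarrow> nat) \<Rightarrow> 'a) \<Rightarrow> ('n \<Rightarrow> nat) \<Rightarrow> 'a" where
  "poly_act P s m = (\<Sum>j\<in>{j. P j \<noteq> 0}. P j * s (\<lambda>i. m i + j i))"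

definition ann_ideal :: "(('n \<Rightarrow> nat) \<Rightarrow> 'a::field) \<Rightarrow> (('n \<Rightarrow> nat) \<Rightarrow> 'a) set" where
  "ann_ideal s = {P. is_poly P \<and> poly_act P s = (\<lambda>_. 0)}"

definition lin_indep_mod ::
  "(('n \<Rightarrow> nat) \<Rightarrow> 'a::field) set \<Rightarrow> nat \<Rightarrow> (nat \<Rightarrow> ('n \<Rightarrow> nat) \<Rightarrow> 'a) \<Rightarrow> bool" where
  "lin_indep_mod I k b \<longleftrightarrow>
     (\<forall>c::nat \<Rightarrow> 'a. (\<lambda>j. \<Sum>i<k. c i * b i j) \<in> I \<longrightarrow> (\<forall>i<k. c i = 0))"

text \<open>Linear complexity L(s) = dim_F (F[X_1..X_n] / I(s)), i.e. the maximal number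
  of polynomials linearly independent modulo I(s).\<close>
definition lin_compl :: "(('n \<Rightarrow> nat) \<Rightarrow> 'a::field) \<Rightarrow> nat" where
  "lin_compl s = Sup {k. \<exists>b. (\<forall>i<k. is_poly (b i)) \<and> lin_indep_mod (ann_ideal s) k b}"

definition periodic_seqs :: "('n \<Rightarrow> nat) \<Rightarrow> (('n \<Rightarrow> nat) \<Rightarrow> 'a) set" where
  "periodic_seqs T = {s. \<forall>m i. s (m(i := m i + T i)) = s m}"

end

theory Submission
  imports Defs "HOL-Library.FuncSet" "HOL-Real_Asymp.Real_Asymp"
begin

(* If L(s) <= k, a set S of at most k exponent vectors whose shifts of s span all shifts of s is
   obtained greedily, adding an exponent vector whenever the corresponding shift of s is independent
   of the shifts already chosen.  Because it is grown one unit step at a time, S is rooted (every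
   nonzero w in S has some w - e_i in S) and lies in the box [0,k)^n.  A sequence spanned by S is
   determined by its values on S and by the coefficients expressing s and its shifts by the border
   {j + e_i not in S : j in S} through the shifts by S, and a rooted set has at most (n-1)|S| + 1
   border elements.  Hence at most (k+1)^(nk+1) q^((n-1)k^2+3k) periodic sequences satisfy L(s) <= k.
   For k <= sqrt((1-eps) N/(n-1)) with N = T_1...T_n this is q^((1-eps)N + O(sqrt N log N)), a
   vanishing fraction of the q^N periodic sequences. *)

section \<open>Spans of shifts\<close>

definition vadd :: "('n \<Rightarrow> nat) \<Rightarrow> ('n \<Rightarrow> nat) \<Rightarrow> 'n \<Rightarrow> nat" where
  "vadd x j = (\<lambda>i. x i + j i)"

definition incr :: "('n \<Rightarrow> nat) \<Rightarrow> 'n \<Rightarrow> 'n \<Rightarrow> nat" where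
  "incr j i = j(i := j i + 1)"

definition shift :: "('n \<Rightarrow> nat) \<Rightarrow> (('n \<Rightarrow> nat) \<Rightarrow> 'a) \<Rightarrow> ('n \<Rightarrow> nat) \<Rightarrow> 'a" where
  "shift j s = (\<lambda>x. s (vadd x j))"

definition shift_comb ::
  "(('n \<Rightarrow> nat) \<Rightarrow> 'a::field) \<Rightarrow> ('n \<Rightarrow> nat) set \<Rightarrow> (('n \<Rightarrow> nat) \<Rightarrow> 'a) \<Rightarrow> ('n \<Rightarrow> nat) \<Rightarrow> 'a"
  where "shift_comb s S c = (\<lambda>x. \<Sum>j\<in>S. c j * s (vadd x j))"

definition in_shift_span ::
  "(('n \<Rightarrow> nat) \<Rightarrow> 'a::field) \<Rightarrow> ('n \<Rightarrow> nat) set \<Rightarrow> (('n \<Rightarrow> nat) \<Rightarrow> 'a) \<Rightarrow> bool"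
  where "in_shift_span s S f \<longleftrightarrow> (\<exists>c. f = shift_comb s S c)"

(* spans s S says that the monomials X^j, j in S, span F[X]/I(s). *)
definition spans :: "(('n \<Rightarrow> nat) \<Rightarrow> 'a::field) \<Rightarrow> ('n \<Rightarrow> nat) set \<Rightarrow> bool" where
  "spans s S \<longleftrightarrow> in_shift_span s S s \<and> (\<forall>j\<in>S. \<forall>i. in_shift_span s S (shift (incr j i) s))"

lemma sum_fun_upd_less:
  fixes m :: "'n::finite \<Rightarrow> nat"
  assumes "v < m i"
  shows "sum (m(i := v)) UNIV < sum m UNIV"
proof -
  have "sum (m(i := v)) UNIV = v + sum (m(i := v)) (UNIV - {i})"
    by (subst sum.remove[of _ i]) auto
  moreover have "sum (m(i := v)) (UNIV - {i}) = sum m (UNIV - {i})"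
    by (rule sum.cong) auto
  moreover have "sum m UNIV = m i + sum m (UNIV - {i})"
    by (rule sum.remove) auto
  ultimately show ?thesis
    using assms by linarith
qed

lemma shift_0 [simp]: "shift (\<lambda>_. 0) s = s"
  by (simp add: shift_def vadd_def)

lemma shift_comb_diff:
  "shift_comb (\<lambda>x. s x - s' x) S c = (\<lambda>x. shift_comb s S c x - shift_comb s' S c x)"
  unfolding shift_comb_def by (simp add: sum_subtractf right_diff_distrib)

lemma shift_comb_coeff_diff:
  "shift_comb s S (\<lambda>j. c j - d j) = (\<lambda>x. shift_comb s S c x - shift_comb s S d x)"
  unfolding shift_comb_def by (simp add: sum_subtractf left_diff_distrib)

lemma shift_comb_restrict: "shift_comb s S (restrict c S) = shift_comb s S c"
  unfolding shift_comb_def by (intro ext sum.cong) auto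

lemma shift_comb_delta:
  assumes "finite S" "w \<in> S"
  shows "shift_comb s S (\<lambda>l. if l = w then 1 else 0) = shift w s"
proof
  fix x
  have "(\<Sum>j\<in>S. (if j = w then 1 else 0) * s (vadd x j)) = (\<Sum>j\<in>S. if j = w then s (vadd x w) else 0)"
    by (rule sum.cong) auto
  then show "shift_comb s S (\<lambda>l. if l = w then 1 else 0) x = shift w s x"
    using assms unfolding shift_comb_def shift_def by simp
qed

lemma in_shift_span_shift_mem:
  assumes "finite S" "w \<in> S"
  shows "in_shift_span s S (shift w s)"
  using shift_comb_delta[OF assms, of s, symmetric] unfolding in_shift_span_def by blast

lemma in_shift_span_incr:
  fixes s :: "('n \<Rightarrow> nat) \<Rightarrow> 'a::field"
  assumes "spans s S" and f: "in_shift_span s S f"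
  shows "in_shift_span s S (\<lambda>x. f (incr x i))"
proof -
  obtain c where c: "f = shift_comb s S c"
    using f unfolding in_shift_span_def by blast
  have "\<forall>j\<in>S. \<exists>d. shift (incr j i) s = shift_comb s S d"
    using assms(1) unfolding spans_def in_shift_span_def by blast
  then obtain d where d: "\<And>j. j \<in> S \<Longrightarrow> shift (incr j i) s = shift_comb s S (d j)"
    by metis
  have "f (incr x i) = shift_comb s S (\<lambda>l. \<Sum>j\<in>S. c j * d j l) x" for x
  proof -
    have "f (incr x i) = (\<Sum>j\<in>S. c j * shift (incr j i) s x)"
      unfolding c shift_comb_def shift_def
      by (intro sum.cong arg_cong[where f = "\<lambda>y. _ * s y"]) (auto simp: vadd_def incr_def)
    also have "\<dots> = (\<Sum>j\<in>S. \<Sum>l\<in>S. c j * d j l * s (vadd x l))"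
      by (simp add: d shift_comb_def sum_distrib_left mult.assoc)
    also have "\<dots> = shift_comb s S (\<lambda>l. \<Sum>j\<in>S. c j * d j l) x"
      unfolding shift_comb_def sum_distrib_right by (rule sum.swap)
    finally show ?thesis .
  qed
  then show ?thesis
    unfolding in_shift_span_def by blast
qed

lemma in_shift_span_shift:
  fixes s :: "('n::finite \<Rightarrow> nat) \<Rightarrow> 'a::field"
  assumes "spans s S"
  shows "in_shift_span s S (shift m s)"
proof (induction m rule: measure_induct_rule[where f = "\<lambda>m. sum m UNIV"])
  case (less m)
  show ?case
  proof (cases "m = (\<lambda>_. 0)")
    case True
    then show ?thesis
      using assms unfolding spans_def by simp
  next
    case False
    then obtain i where i: "m i > 0"
      by (auto simp: fun_eq_iff)
    define m' where "m' = m(i := m i - 1)"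
    have "sum m' UNIV < sum m UNIV"
      unfolding m'_def by (rule sum_fun_upd_less) (use i in simp)
    then have "in_shift_span s S (shift m' s)"
      by (rule less)
    then have "in_shift_span s S (\<lambda>x. shift m' s (incr x i))"
      by (rule in_shift_span_incr[OF assms])
    moreover have "(\<lambda>x. shift m' s (incr x i)) = shift m s"
      using i unfolding shift_def vadd_def incr_def m'_def
      by (intro ext arg_cong[where f = s]) (auto simp: fun_eq_iff)
    ultimately show ?thesis
      by simp
  qed
qed

lemma spans_vanishing_eq_0:
  fixes D :: "('n::finite \<Rightarrow> nat) \<Rightarrow> 'a::field"
  assumes "spans D S" and "\<forall>j\<in>S. D j = 0"
  shows "D = (\<lambda>_. 0)"
proof
  fix m
  obtain c where c: "shift m D = shift_comb D S c"
    using in_shift_span_shift[OF assms(1)] unfolding in_shift_span_def by blast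
  have "D m = shift m D (\<lambda>_. 0)"
    by (simp add: shift_def vadd_def)
  also have "\<dots> = (\<Sum>j\<in>S. c j * D j)"
    by (simp add: c shift_comb_def vadd_def)
  finally show "D m = 0"
    using assms(2) by simp
qed

definition span_coeffs ::
  "(('n \<Rightarrow> nat) \<Rightarrow> 'a::field) \<Rightarrow> ('n \<Rightarrow> nat) set \<Rightarrow> (('n \<Rightarrow> nat) \<Rightarrow> 'a) \<Rightarrow> ('n \<Rightarrow> nat) \<Rightarrow> 'a"
  where "span_coeffs s S f = (SOME c. c \<in> S \<rightarrow>\<^sub>E UNIV \<and> f = shift_comb s S c)"

lemma span_coeffs:
  assumes "in_shift_span s S f"
  shows "span_coeffs s S f \<in> S \<rightarrow>\<^sub>E UNIV \<and> f = shift_comb s S (span_coeffs s S f)"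
proof -
  obtain c where "f = shift_comb s S c"
    using assms unfolding in_shift_span_def by blast
  then have "restrict c S \<in> S \<rightarrow>\<^sub>E UNIV \<and> f = shift_comb s S (restrict c S)"
    by (simp add: shift_comb_restrict)
  then show ?thesis
    unfolding span_coeffs_def
    by (rule someI[where P = "\<lambda>c. c \<in> S \<rightarrow>\<^sub>E UNIV \<and> f = shift_comb s S c"])
qed

definition border :: "('n \<Rightarrow> nat) set \<Rightarrow> (('n \<Rightarrow> nat) \<times> 'n) set" where
  "border S = {(j, i). j \<in> S \<and> incr j i \<notin> S}"

definition span_code :: "('n \<Rightarrow> nat) set \<Rightarrow> (('n \<Rightarrow> nat) \<Rightarrow> 'a::field) \<Rightarrow>
    (('n \<Rightarrow> nat) \<times> 'n \<Rightarrow> ('n \<Rightarrow> nat) \<Rightarrow> 'a) \<times> (('n \<Rightarrow> nat) \<Rightarrow> 'a) \<times> (('n \<Rightarrow> nat) \<Rightarrow> 'a)" where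
  "span_code S s =
     (restrict (\<lambda>(j, i). span_coeffs s S (shift (incr j i) s)) (border S),
      span_coeffs s S s, restrict s S)"

lemma in_shift_span_diff:
  assumes "f = shift_comb s S c" and "f' = shift_comb s' S c"
  shows "in_shift_span (\<lambda>x. s x - s' x) S (\<lambda>x. f x - f' x)"
  unfolding in_shift_span_def assms shift_comb_diff by blast

lemma spans_diff:
  assumes fin: "finite S" and sp: "spans s S" and sp': "spans s' S"
    and code: "span_code S s = span_code S s'"
  shows "spans (\<lambda>x. s x - s' x) S"
  unfolding spans_def
proof (intro conjI ballI allI)
  have "span_coeffs s S s = span_coeffs s' S s'"
    using code unfolding span_code_def by simp
  then show "in_shift_span (\<lambda>x. s x - s' x) S (\<lambda>x. s x - s' x)"
    using span_coeffs[of s S s] span_coeffs[of s' S s'] sp sp'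
    unfolding spans_def by (intro in_shift_span_diff) auto
next
  fix j i
  assume j: "j \<in> S"
  show "in_shift_span (\<lambda>x. s x - s' x) S (shift (incr j i) (\<lambda>x. s x - s' x))"
  proof (cases "incr j i \<in> S")
    case True
    then show ?thesis
      by (rule in_shift_span_shift_mem[OF fin])
  next
    case False
    then have "(j, i) \<in> border S"
      using j unfolding border_def by simp
    then have "span_coeffs s S (shift (incr j i) s) = span_coeffs s' S (shift (incr j i) s')"
      using code unfolding span_code_def by (auto dest: fun_cong[where x = "(j, i)"])
    then have "in_shift_span (\<lambda>x. s x - s' x) S (\<lambda>x. shift (incr j i) s x - shift (incr j i) s' x)"
      using span_coeffs[of s S "shift (incr j i) s"] span_coeffs[of s' S "shift (incr j i) s'"] sp sp' j
      unfolding spans_def by (intro in_shift_span_diff) auto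
    then show ?thesis
      by (simp add: shift_def)
  qed
qed

lemma span_code_inj:
  fixes s s' :: "('n::finite \<Rightarrow> nat) \<Rightarrow> 'a::field"
  assumes "finite S" "spans s S" "spans s' S" and code: "span_code S s = span_code S s'"
  shows "s = s'"
proof -
  have "restrict s S = restrict s' S"
    using code unfolding span_code_def by simp
  then have "\<forall>j\<in>S. s j - s' j = 0"
    by (metis restrict_apply' right_minus_eq)
  then have "(\<lambda>x. s x - s' x) = (\<lambda>_. 0)"
    by (rule spans_vanishing_eq_0[OF spans_diff[OF assms]])
  then show ?thesis
    by (auto simp: fun_eq_iff)
qed

lemma finite_border: "finite S \<Longrightarrow> finite (border (S :: ('n::finite \<Rightarrow> nat) set))"
  by (rule finite_subset[of _ "S \<times> UNIV"]) (auto simp: border_def)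

lemma card_spans_le:
  fixes S :: "('n::finite \<Rightarrow> nat) set"
  assumes fin: "finite S"
  shows "finite {s :: ('n \<Rightarrow> nat) \<Rightarrow> 'a::{finite,field}. spans s S}"
    and "card {s :: ('n \<Rightarrow> nat) \<Rightarrow> 'a. spans s S}
           \<le> CARD('a) ^ (card S * card (border S) + 2 * card S)"
proof -
  let ?A = "{s :: ('n \<Rightarrow> nat) \<Rightarrow> 'a. spans s S}"
  let ?C = "S \<rightarrow>\<^sub>E (UNIV :: 'a set)"
  let ?B = "(border S \<rightarrow>\<^sub>E ?C) \<times> ?C \<times> ?C"
  have inj: "inj_on (span_code S) ?A"
    by (rule inj_onI) (use span_code_inj[OF fin] in blast)
  have "span_code S s \<in> ?B" if sp: "spans s S" for s
  proof -
    have "span_coeffs s S (shift (incr j i) s) \<in> ?C" if "(j, i) \<in> border S" for j i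
      using that sp span_coeffs unfolding spans_def border_def by blast
    moreover have "span_coeffs s S s \<in> ?C"
      using sp span_coeffs unfolding spans_def by blast
    ultimately show ?thesis
      unfolding span_code_def by (auto simp: restrict_PiE_iff)
  qed
  then have sub: "span_code S ` ?A \<subseteq> ?B"
    by blast
  have finB: "finite ?B"
    using fin finite_border[OF fin] by (intro finite_cartesian_product finite_PiE) auto
  have "card ?B = (CARD('a) ^ card S) ^ card (border S) * (CARD('a) ^ card S * CARD('a) ^ card S)"
    using fin finite_border[OF fin] by (simp add: card_cartesian_product card_PiE)
  also have "\<dots> = CARD('a) ^ (card S * card (border S) + 2 * card S)"
    by (simp add: power_mult power_add mult_2)
  finally show "card ?A \<le> CARD('a) ^ (card S * card (border S) + 2 * card S)"
    using card_inj_on_le[OF inj sub finB] by simp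
  show "finite ?A"
    using inj_on_finite[OF inj sub finB] .
qed

definition rooted :: "('n \<Rightarrow> nat) set \<Rightarrow> bool" where
  "rooted S \<longleftrightarrow> (\<forall>w\<in>S. w \<noteq> (\<lambda>_. 0) \<longrightarrow> (\<exists>i. w i > 0 \<and> w(i := w i - 1) \<in> S))"

lemma card_border_le:
  fixes S :: "('n::finite \<Rightarrow> nat) set"
  assumes fin: "finite S" and "rooted S"
  shows "card (border S) \<le> (CARD('n) - 1) * card S + 1"
proof -
  (* By rootedness, (j, i) |-> j + e_i maps the pairs outside the border onto S - {0}. *)
  define I where "I = {(j, i). j \<in> S \<and> incr j i \<in> S}"
  have "border S \<union> I = S \<times> UNIV" and "border S \<inter> I = {}"
    unfolding I_def border_def by auto
  moreover have finI: "finite I"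
    by (rule finite_subset[of _ "S \<times> UNIV"]) (auto simp: I_def fin)
  ultimately have "card (border S) + card I = CARD('n) * card S"
    using card_Un_disjoint[OF finite_border[OF fin] finI] by (simp add: card_cartesian_product mult.commute)
  moreover have "S - {\<lambda>_. 0} \<subseteq> (\<lambda>(j, i). incr j i) ` I"
  proof
    fix w
    assume w: "w \<in> S - {\<lambda>_. 0}"
    then obtain i where i: "w i > 0" "w(i := w i - 1) \<in> S"
      using assms(2) unfolding rooted_def by blast
    show "w \<in> (\<lambda>(j, i). incr j i) ` I"
    proof (rule rev_image_eqI[of "(w(i := w i - 1), i)"])
      show "w = (\<lambda>(j, i). incr j i) (w(i := w i - 1), i)"
        using i by (auto simp: incr_def fun_eq_iff)
      with i w show "(w(i := w i - 1), i) \<in> I"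
        unfolding I_def by auto
    qed
  qed
  then have "card (S - {\<lambda>_. 0}) \<le> card I"
    using finI by (meson card_image_le card_mono finite_imageI le_trans)
  moreover have "card S \<le> card (S - {\<lambda>_. 0}) + 1"
    by (simp add: card_Diff_singleton_if) linarith
  moreover have "(CARD('n) - 1) * card S = CARD('n) * card S - card S"
    by (simp add: diff_mult_distrib)
  ultimately show ?thesis
    by linarith
qed

section \<open>Periodic sequences and linear complexity\<close>

definition box :: "('n \<Rightarrow> nat) \<Rightarrow> ('n \<Rightarrow> nat) set" where
  "box T = {m. \<forall>i. m i < T i}"

definition vmod :: "('n \<Rightarrow> nat) \<Rightarrow> ('n \<Rightarrow> nat) \<Rightarrow> 'n \<Rightarrow> nat" where
  "vmod T m = (\<lambda>i. m i mod T i)"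

lemma box_eq_PiE: "box T = PiE UNIV (\<lambda>i. {..<T i})"
  unfolding box_def PiE_UNIV_domain by auto

lemma finite_box: "finite (box (T :: 'n::finite \<Rightarrow> nat))"
  unfolding box_eq_PiE by (rule finite_PiE) auto

lemma card_box: "card (box (T :: 'n::finite \<Rightarrow> nat)) = (\<Prod>i\<in>UNIV. T i)"
  unfolding box_eq_PiE by (simp add: card_PiE)

lemma box_mono: "(\<And>i. T i \<le> T' i) \<Longrightarrow> box T \<subseteq> box T'"
  unfolding box_def using less_le_trans by blast

lemma vmod_in_box: "\<forall>i. T i > 0 \<Longrightarrow> vmod T m \<in> box T"
  unfolding vmod_def box_def by auto

lemma vmod_eq_self: "m \<in> box T \<Longrightarrow> vmod T m = m"
  unfolding vmod_def box_def by auto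

lemma vmod_add_period: "vmod T (m(i := m i + T i)) = vmod T m"
  unfolding vmod_def by auto

lemma periodic_vmod:
  fixes s :: "('n::finite \<Rightarrow> nat) \<Rightarrow> 'a"
  assumes s: "s \<in> periodic_seqs T" and T: "\<forall>i. T i > 0"
  shows "s (vmod T m) = s m"
proof (induction m rule: measure_induct_rule[where f = "\<lambda>m. sum m UNIV"])
  case (less m)
  show ?case
  proof (cases "m \<in> box T")
    case True
    then show ?thesis
      by (simp add: vmod_eq_self)
  next
    case False
    then obtain i where i: "T i \<le> m i"
      unfolding box_def by (auto simp: not_less)
    define m' where "m' = m(i := m i - T i)"
    have m: "m = m'(i := m' i + T i)"
      using i unfolding m'_def by (auto simp: fun_eq_iff)
    have "sum m' UNIV < sum m UNIV"
      unfolding m'_def by (rule sum_fun_upd_less) (use i T[rule_format, of i] in linarith)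
    then have "s (vmod T m') = s m'"
      by (rule less)
    moreover have "s m = s m'"
      by (subst m) (use s in \<open>simp add: periodic_seqs_def\<close>)
    moreover have "vmod T m = vmod T m'"
      by (subst m) (rule vmod_add_period)
    ultimately show ?thesis
      by simp
  qed
qed

lemma periodic_eqI:
  fixes s s' :: "('n::finite \<Rightarrow> nat) \<Rightarrow> 'a"
  assumes "s \<in> periodic_seqs T" "s' \<in> periodic_seqs T" "\<forall>i. T i > 0"
    and "\<forall>m\<in>box T. s m = s' m"
  shows "s = s'"
proof
  fix m
  have "s m = s (vmod T m)"
    using periodic_vmod[OF assms(1,3)] by simp
  also have "\<dots> = s' (vmod T m)"
    using assms(4) vmod_in_box[OF assms(3)] by blast
  also have "\<dots> = s' m"
    using periodic_vmod[OF assms(2,3)] .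
  finally show "s m = s' m" .
qed

lemma card_periodic_seqs:
  fixes T :: "'n::finite \<Rightarrow> nat"
  assumes T: "\<forall>i. T i > 0"
  shows "finite (periodic_seqs T :: (('n \<Rightarrow> nat) \<Rightarrow> 'a::finite) set)"
    and "card (periodic_seqs T :: (('n \<Rightarrow> nat) \<Rightarrow> 'a) set) = CARD('a) ^ (\<Prod>i\<in>UNIV. T i)"
proof -
  let ?P = "periodic_seqs T :: (('n \<Rightarrow> nat) \<Rightarrow> 'a) set"
  let ?B = "box T \<rightarrow>\<^sub>E (UNIV :: 'a set)"
  have bij: "bij_betw (\<lambda>s. restrict s (box T)) ?P ?B"
  proof (rule bij_betw_byWitness[where f' = "\<lambda>f m. f (vmod T m)"])
    show "\<forall>s\<in>?P. (\<lambda>m. restrict s (box T) (vmod T m)) = s"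
      by (simp add: fun_eq_iff vmod_in_box[OF T] periodic_vmod[OF _ T])
    show "\<forall>f\<in>?B. restrict (\<lambda>m. f (vmod T m)) (box T) = f"
      by (auto simp: fun_eq_iff vmod_eq_self PiE_def extensional_def)
    show "(\<lambda>f m. f (vmod T m)) ` ?B \<subseteq> ?P"
      unfolding periodic_seqs_def by (auto simp only: vmod_add_period)
    show "(\<lambda>s. restrict s (box T)) ` ?P \<subseteq> ?B"
      by auto
  qed
  have "finite ?B"
    using finite_box by (intro finite_PiE) auto
  then show "finite ?P"
    using bij_betw_finite[OF bij] by simp
  show "card ?P = CARD('a) ^ (\<Prod>i\<in>UNIV. T i)"
    using bij_betw_same_card[OF bij] card_PiE[OF finite_box, of T "\<lambda>_. UNIV :: 'a set"]
    by (simp add: card_box)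
qed

lemma poly_act_periodic:
  assumes "s \<in> periodic_seqs T"
  shows "poly_act P s \<in> periodic_seqs T"
proof -
  have per: "s (m(i := m i + T i)) = s m" for m i
    using assms unfolding periodic_seqs_def by blast
  have "s (\<lambda>l. (m(i := m i + T i)) l + j l) = s (\<lambda>l. m l + j l)" for m i j
  proof -
    have "(\<lambda>l. (m(i := m i + T i)) l + j l) = (\<lambda>l. m l + j l)(i := m i + j i + T i)"
      by (auto simp: fun_eq_iff)
    then show ?thesis
      using per[of "\<lambda>l. m l + j l" i] by simp
  qed
  then show ?thesis
    unfolding periodic_seqs_def poly_act_def by simp
qed

lemma poly_act_eq_shift_comb:
  assumes "finite A" "{j. P j \<noteq> 0} \<subseteq> A"
  shows "poly_act P s = shift_comb s A P"
  unfolding poly_act_def shift_comb_def vadd_def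
  by (intro ext sum.mono_neutral_left) (use assms in auto)

lemma one_less_card_field: "1 < CARD('a::{finite,field})"
  using card_mono[OF finite_class.finite_UNIV, of "{0::'a, 1}"] by simp

lemma support_sum_subset: "{j. (\<Sum>i\<in>I. f i j) \<noteq> 0} \<subseteq> (\<Union>i\<in>I. {j. f i j \<noteq> 0})"
  by (auto elim: sum.not_neutral_contains_not_neutral)

lemma restrict_box_poly_act_inj:
  fixes s :: "('n::finite \<Rightarrow> nat) \<Rightarrow> 'a::field"
  assumes s: "s \<in> periodic_seqs T" and T: "\<forall>i. T i > 0"
    and b: "\<forall>i<k. is_poly (b i)" and li: "lin_indep_mod (ann_ideal s) k b"
  shows "inj_on (\<lambda>c. restrict (poly_act (\<lambda>j. \<Sum>i<k. c i * b i j) s) (box T)) ({..<k} \<rightarrow>\<^sub>E UNIV)"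
proof (rule inj_onI)
  define A where "A = (\<Union>i<k. {j. b i j \<noteq> 0})"
  have finA: "finite A"
    using b unfolding A_def is_poly_def by auto
  define P where "P c = (\<lambda>j. \<Sum>i<k. c i * b i j)" for c :: "nat \<Rightarrow> 'a"
  have suppP: "{j. P c j \<noteq> 0} \<subseteq> A" for c
    using support_sum_subset[of "\<lambda>i j. c i * b i j" "{..<k}"] unfolding P_def A_def by auto
  have actP: "poly_act (P c) s = shift_comb s A (P c)" for c
    by (rule poly_act_eq_shift_comb[OF finA suppP])
  fix c c'
  assume c: "c \<in> {..<k} \<rightarrow>\<^sub>E UNIV" and c': "c' \<in> {..<k} \<rightarrow>\<^sub>E UNIV"
    and F: "restrict (poly_act (\<lambda>j. \<Sum>i<k. c i * b i j) s) (box T)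
       = restrict (poly_act (\<lambda>j. \<Sum>i<k. c' i * b i j) s) (box T)"
  have "poly_act (P c) s m = poly_act (P c') s m" if "m \<in> box T" for m
    using fun_cong[OF F, of m] that unfolding P_def by simp
  then have "\<forall>m\<in>box T. poly_act (P c) s m = poly_act (P c') s m"
    by blast
  then have eq: "poly_act (P c) s = poly_act (P c') s"
    by (rule periodic_eqI[OF poly_act_periodic[OF s] poly_act_periodic[OF s] T])
  define d where "d i = c i - c' i" for i
  have Pd: "P d = (\<lambda>j. P c j - P c' j)"
    unfolding P_def d_def by (simp add: fun_eq_iff sum_subtractf left_diff_distrib)
  have "poly_act (P d) s = shift_comb s A (\<lambda>j. P c j - P c' j)"
    using actP[of d] unfolding Pd .
  also have "\<dots> = (\<lambda>x. poly_act (P c) s x - poly_act (P c') s x)"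
    by (simp only: actP shift_comb_coeff_diff)
  finally have "poly_act (P d) s = (\<lambda>_. 0)"
    by (simp add: eq)
  moreover have "is_poly (P d)"
    unfolding is_poly_def by (rule finite_subset[OF suppP finA])
  ultimately have "P d \<in> ann_ideal s"
    unfolding ann_ideal_def by simp
  then have "\<forall>i<k. d i = 0"
    using li unfolding lin_indep_mod_def P_def by blast
  then show "c = c'"
    by (intro PiE_ext[OF c c']) (auto simp: d_def)
qed

lemma lin_indep_mod_ann_ideal_le:
  fixes s :: "('n::finite \<Rightarrow> nat) \<Rightarrow> 'a::{finite,field}"
  assumes s: "s \<in> periodic_seqs T" and T: "\<forall>i. T i > 0"
    and b: "\<forall>i<k. is_poly (b i)" and li: "lin_indep_mod (ann_ideal s) k b"
  shows "k \<le> (\<Prod>i\<in>UNIV. T i)"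
proof -
  let ?F = "\<lambda>c. restrict (poly_act (\<lambda>j. \<Sum>i<k. c i * b i j) s) (box T)"
  have "?F ` ({..<k} \<rightarrow>\<^sub>E UNIV) \<subseteq> box T \<rightarrow>\<^sub>E UNIV"
    by (intro image_subsetI) simp
  moreover have "finite (box T \<rightarrow>\<^sub>E (UNIV :: 'a set))"
    using finite_box by (rule finite_PiE) simp
  ultimately have "card ({..<k} \<rightarrow>\<^sub>E (UNIV :: 'a set)) \<le> card (box T \<rightarrow>\<^sub>E (UNIV :: 'a set))"
    by (intro card_inj_on_le[OF restrict_box_poly_act_inj[OF assms]])
  moreover have "card ({..<k} \<rightarrow>\<^sub>E (UNIV :: 'a set)) = CARD('a) ^ k"
    using card_PiE[of "{..<k}" "\<lambda>_. UNIV :: 'a set"] by simp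
  moreover have "card (box T \<rightarrow>\<^sub>E (UNIV :: 'a set)) = CARD('a) ^ (\<Prod>i\<in>UNIV. T i)"
    using card_PiE[OF finite_box, of T "\<lambda>_. UNIV :: 'a set"] by (simp add: card_box)
  ultimately have "CARD('a) ^ k \<le> CARD('a) ^ (\<Prod>i\<in>UNIV. T i)"
    by simp
  then show ?thesis
    by (rule power_le_imp_le_exp[OF one_less_card_field])
qed

(* shift_indep s S says that the monomials X^j, j in S, are linearly independent modulo I(s). *)
definition shift_indep :: "(('n \<Rightarrow> nat) \<Rightarrow> 'a::field) \<Rightarrow> ('n \<Rightarrow> nat) set \<Rightarrow> bool" where
  "shift_indep s S \<longleftrightarrow> (\<forall>c. shift_comb s S c = (\<lambda>_. 0) \<longrightarrow> (\<forall>j\<in>S. c j = 0))"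

lemma lin_indep_mod_ann_ideal_if_shift_indep:
  fixes s :: "('n \<Rightarrow> nat) \<Rightarrow> 'a::field"
  assumes fin: "finite S" and ind: "shift_indep s S" and g: "bij_betw g {..<card S} S"
  shows "lin_indep_mod (ann_ideal s) (card S) (\<lambda>i j. if j = g i then 1 else (0::'a))"
  unfolding lin_indep_mod_def
proof (rule allI, rule impI)
  fix c
  define Q where "Q = (\<lambda>j. \<Sum>i<card S. c i * (if j = g i then 1 else (0::'a)))"
  assume "(\<lambda>j. \<Sum>i<card S. c i * (if j = g i then 1 else (0::'a))) \<in> ann_ideal s"
  then have Q: "poly_act Q s = (\<lambda>_. 0)"
    unfolding ann_ideal_def Q_def by simp
  have inj: "inj_on g {..<card S}"
    using g by (rule bij_betw_imp_inj_on)
  have Qg: "Q (g i) = c i" if "i < card S" for i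
  proof -
    have "Q (g i) = (\<Sum>i'<card S. if i' = i then c i' else 0)"
      unfolding Q_def using inj that by (intro sum.cong) (auto dest: inj_onD)
    then show ?thesis
      using that by simp
  qed
  have "{j. Q j \<noteq> 0} \<subseteq> S"
    using support_sum_subset[of "\<lambda>i j. c i * (if j = g i then 1 else (0::'a))" "{..<card S}"] bij_betwE[OF g]
    unfolding Q_def by (auto split: if_splits)
  then have "shift_comb s S Q = (\<lambda>_. 0)"
    using poly_act_eq_shift_comb[OF fin, of Q s] Q by simp
  then have "\<forall>j\<in>S. Q j = 0"
    using ind unfolding shift_indep_def by blast
  then show "\<forall>i<card S. c i = 0"
    using Qg bij_betwE[OF g] by fastforce
qed

lemma card_le_lin_compl:
  fixes s :: "('n::finite \<Rightarrow> nat) \<Rightarrow> 'a::{finite,field}"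
  assumes s: "s \<in> periodic_seqs T" and T: "\<forall>i. T i > 0"
    and fin: "finite S" and ind: "shift_indep s S"
  shows "card S \<le> lin_compl s"
proof -
  let ?K = "{k. \<exists>b. (\<forall>i<k. is_poly (b i)) \<and> lin_indep_mod (ann_ideal s) k b}"
  have bdd: "bdd_above ?K"
    using lin_indep_mod_ann_ideal_le[OF s T] by (intro bdd_aboveI[of _ "\<Prod>i\<in>UNIV. T i"]) blast
  obtain g where g: "bij_betw g {..<card S} S"
    using ex_bij_betw_nat_finite[OF fin] by (auto simp: atLeast0LessThan)
  have "\<forall>i<card S. is_poly (\<lambda>j. if j = g i then 1 else (0::'a))"
    unfolding is_poly_def by simp
  then have "card S \<in> ?K"
    using lin_indep_mod_ann_ideal_if_shift_indep[OF fin ind g] by (intro CollectI exI) (rule conjI)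
  then show ?thesis
    unfolding lin_compl_def using bdd by (rule cSup_upper)
qed

(* The box condition confines the candidate sets S to a finite family. *)
definition admissible :: "(('n \<Rightarrow> nat) \<Rightarrow> 'a::field) \<Rightarrow> ('n \<Rightarrow> nat) set \<Rightarrow> bool" where
  "admissible s S \<longleftrightarrow> finite S \<and> S \<subseteq> box (\<lambda>_. card S) \<and> rooted S \<and> shift_indep s S"

lemma shift_comb_insert:
  assumes "finite S" "w \<notin> S"
  shows "shift_comb s (insert w S) c = (\<lambda>x. c w * shift w s x + shift_comb s S c x)"
  using assms unfolding shift_comb_def shift_def by simp

lemma shift_indep_insert:
  fixes s :: "('n \<Rightarrow> nat) \<Rightarrow> 'a::field"
  assumes ind: "shift_indep s S" and fin: "finite S" and w: "w \<notin> S"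
    and new: "\<not> in_shift_span s S (shift w s)"
  shows "shift_indep s (insert w S)"
  unfolding shift_indep_def
proof (intro allI impI)
  fix c
  assume "shift_comb s (insert w S) c = (\<lambda>_. 0)"
  then have z: "c w * shift w s x + shift_comb s S c x = 0" for x
    unfolding shift_comb_insert[OF fin w] by meson
  have cw: "c w = 0"
  proof (rule ccontr)
    assume cw: "c w \<noteq> 0"
    have "shift w s = shift_comb s S (\<lambda>j. - c j / c w)"
    proof
      fix x
      have "shift_comb s S (\<lambda>j. - c j / c w) x = - shift_comb s S c x / c w"
        unfolding shift_comb_def by (simp add: sum_divide_distrib sum_negf)
      also have "\<dots> = shift w s x"
        using z[of x] cw by (simp add: field_simps neg_eq_iff_add_eq_0)
      finally show "shift w s x = shift_comb s S (\<lambda>j. - c j / c w) x"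
        by simp
    qed
    then show False
      using new unfolding in_shift_span_def by blast
  qed
  then have "shift_comb s S c = (\<lambda>_. 0)"
    using z by auto
  then show "\<forall>j\<in>insert w S. c j = 0"
    using ind cw unfolding shift_indep_def by simp
qed

lemma admissible_insert:
  fixes s :: "('n \<Rightarrow> nat) \<Rightarrow> 'a::field"
  assumes adm: "admissible s S" and new: "\<not> in_shift_span s S (shift w s)"
    and bound: "\<forall>l. w l \<le> card S"
    and pred: "w \<noteq> (\<lambda>_. 0) \<longrightarrow> (\<exists>i. w i > 0 \<and> w(i := w i - 1) \<in> S)"
  shows "admissible s (insert w S)"
proof -
  have fin: "finite S"
    using adm unfolding admissible_def by blast
  have w: "w \<notin> S"
    using new in_shift_span_shift_mem[OF fin] by blast
  have "card (insert w S) = Suc (card S)"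
    using fin w by simp
  then have "insert w S \<subseteq> box (\<lambda>_. card (insert w S))"
    using adm bound unfolding admissible_def box_def by (auto simp: less_Suc_eq_le less_imp_le)
  moreover have "rooted (insert w S)"
    using adm pred unfolding admissible_def rooted_def by blast
  moreover have "shift_indep s (insert w S)"
    using adm fin w new shift_indep_insert unfolding admissible_def by blast
  ultimately show ?thesis
    using fin unfolding admissible_def by simp
qed

lemma exists_rooted_spanning_set:
  fixes s :: "('n::finite \<Rightarrow> nat) \<Rightarrow> 'a::{finite,field}"
  assumes s: "s \<in> periodic_seqs T" and T: "\<forall>i. T i > 0"
  shows "\<exists>S. finite S \<and> card S \<le> lin_compl s \<and> S \<subseteq> box (\<lambda>_. card S) \<and> rooted S \<and> spans s S"
proof -
  (* A maximal admissible S exists since independent sets have at most L(s) elements; by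
     maximality, each unit step out of S leads to a shift of s already in the span. *)
  have "admissible s {}"
    unfolding admissible_def rooted_def shift_indep_def by simp
  moreover have "\<forall>S. admissible s S \<longrightarrow> card S < Suc (lin_compl s)"
    using card_le_lin_compl[OF s T] unfolding admissible_def by (simp add: less_Suc_eq_le)
  ultimately obtain S where adm: "admissible s S"
    and max: "\<And>S'. admissible s S' \<Longrightarrow> card S' \<le> card S"
    using ex_has_greatest_nat[of "admissible s" "{}" card] by metis
  have fin: "finite S"
    using adm unfolding admissible_def by blast
  have span: "in_shift_span s S (shift w s)"
    if "\<forall>l. w l \<le> card S" and "w \<noteq> (\<lambda>_. 0) \<longrightarrow> (\<exists>i. w i > 0 \<and> w(i := w i - 1) \<in> S)" for w
  proof (rule ccontr)
    assume new: "\<not> in_shift_span s S (shift w s)"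
    then have "w \<notin> S"
      using in_shift_span_shift_mem[OF fin] by blast
    moreover have "card (insert w S) \<le> card S"
      using max admissible_insert[OF adm new that] by blast
    ultimately show False
      using fin by simp
  qed
  have "in_shift_span s S s"
    using span[of "\<lambda>_. 0"] by simp
  moreover have "in_shift_span s S (shift (incr j i) s)" if j: "j \<in> S" for j i
  proof (rule span)
    show "\<forall>l. incr j i l \<le> card S"
      using adm j unfolding admissible_def box_def incr_def by (auto simp: Suc_leI less_imp_le)
    have "(incr j i)(i := incr j i i - 1) = j"
      unfolding incr_def by (auto simp: fun_eq_iff)
    then show "incr j i \<noteq> (\<lambda>_. 0) \<longrightarrow> (\<exists>i'. incr j i i' > 0 \<and> (incr j i)(i' := incr j i i' - 1) \<in> S)"
      using j by (intro impI exI[of _ i]) (auto simp: incr_def)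
  qed
  moreover have "card S \<le> lin_compl s"
    using card_le_lin_compl[OF s T fin] adm unfolding admissible_def by blast
  ultimately show ?thesis
    using adm unfolding admissible_def spans_def by blast
qed

section \<open>Counting sequences of low complexity\<close>

lemma card_subsets_card_le:
  assumes fin: "finite A"
  shows "card {S. S \<subseteq> A \<and> card S \<le> k} \<le> (k + 1) * (card A + 1) ^ k"
proof -
  have "{S. S \<subseteq> A \<and> card S \<le> k} = (\<Union>j\<in>{..k}. {S. S \<subseteq> A \<and> card S = j})"
    by auto
  then have "card {S. S \<subseteq> A \<and> card S \<le> k} \<le> (\<Sum>j\<le>k. card {S. S \<subseteq> A \<and> card S = j})"
    by (simp add: card_UN_le)
  also have "\<dots> = (\<Sum>j\<le>k. card A choose j)"
    using n_subsets[OF fin] by simp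
  also have "\<dots> \<le> (\<Sum>j\<le>k. (card A + 1) ^ k)"
  proof (rule sum_mono)
    fix j
    assume "j \<in> {..k}"
    have "card A choose j \<le> (card A + 1) ^ j"
    proof (cases "j \<le> card A")
      case True
      then have "card A choose j \<le> card A ^ j"
        by (rule binomial_le_pow)
      also have "\<dots> \<le> (card A + 1) ^ j"
        by (rule power_mono) auto
      finally show ?thesis .
    qed (simp add: binomial_eq_0)
    also have "\<dots> \<le> (card A + 1) ^ k"
      using \<open>j \<in> {..k}\<close> by (intro power_increasing) auto
    finally show "card A choose j \<le> (card A + 1) ^ k" .
  qed
  also have "\<dots> = (k + 1) * (card A + 1) ^ k"
    by simp
  finally show ?thesis .
qed

lemma power_add_one_le:
  fixes k :: nat
  assumes "n \<ge> 1"
  shows "k ^ n + 1 \<le> (k + 1) ^ n"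
  using assms
proof (induction n rule: dec_induct)
  case (step m)
  have "k ^ Suc m + 1 \<le> (k + 1) * (k ^ m + 1)"
    by (simp add: algebra_simps)
  also have "\<dots> \<le> (k + 1) * (k + 1) ^ m"
    using step.IH by (intro mult_left_mono) auto
  finally show ?case
    by simp
qed simp

lemma card_spans_rooted_le:
  fixes S :: "('n::finite \<Rightarrow> nat) set"
  assumes fin: "finite S" and "rooted S" and k: "card S \<le> k"
  shows "card {s :: ('n \<Rightarrow> nat) \<Rightarrow> 'a::{finite,field}. spans s S}
           \<le> CARD('a) ^ ((CARD('n) - 1) * k\<^sup>2 + 3 * k)"
proof -
  have "card (border S) \<le> (CARD('n) - 1) * k + 1"
    using card_border_le[OF assms(1,2)] k by (meson add_le_mono1 le_trans mult_le_mono2)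
  then have "card S * card (border S) + 2 * card S \<le> k * ((CARD('n) - 1) * k + 1) + 2 * k"
    using k by (intro add_mono mult_le_mono) auto
  also have "\<dots> = (CARD('n) - 1) * k\<^sup>2 + 3 * k"
    using add_mult_distrib2[of k] by (simp add: power2_eq_square)
  finally have "CARD('a) ^ (card S * card (border S) + 2 * card S)
      \<le> CARD('a) ^ ((CARD('n) - 1) * k\<^sup>2 + 3 * k)"
    using one_less_card_field by (intro power_increasing) auto
  then show ?thesis
    using card_spans_le(2)[OF fin] le_trans by blast
qed

definition low_complexity_bound :: "nat \<Rightarrow> nat \<Rightarrow> nat \<Rightarrow> nat" where
  "low_complexity_bound n q k = (k + 1) ^ (n * k + 1) * q ^ ((n - 1) * k\<^sup>2 + 3 * k)"

lemma card_small_subsets_box_le: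
  "finite {S. S \<subseteq> box (\<lambda>_::'n::finite. k) \<and> card S \<le> k}"
  "card {S. S \<subseteq> box (\<lambda>_::'n::finite. k) \<and> card S \<le> k} \<le> (k + 1) ^ (CARD('n) * k + 1)"
proof -
  show "finite {S. S \<subseteq> box (\<lambda>_::'n. k) \<and> card S \<le> k}"
    by (rule finite_subset[of _ "Pow (box (\<lambda>_::'n. k))"]) (auto simp: finite_box)
  have "card {S. S \<subseteq> box (\<lambda>_::'n. k) \<and> card S \<le> k} \<le> (k + 1) * (k ^ CARD('n) + 1) ^ k"
    using card_subsets_card_le[OF finite_box, of "\<lambda>_::'n. k" k] by (simp add: card_box)
  also have "\<dots> \<le> (k + 1) * ((k + 1) ^ CARD('n)) ^ k"
    using power_add_one_le[of "CARD('n)" k] by (intro mult_left_mono power_mono) auto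
  also have "\<dots> = (k + 1) ^ (CARD('n) * k + 1)"
    by (simp add: power_mult)
  finally show "card {S. S \<subseteq> box (\<lambda>_::'n. k) \<and> card S \<le> k} \<le> (k + 1) ^ (CARD('n) * k + 1)" .
qed

lemma low_complexity_subset_spanned:
  fixes T :: "'n::finite \<Rightarrow> nat"
  assumes T: "\<forall>i. T i > 0"
  shows "{s \<in> periodic_seqs T. lin_compl (s :: ('n \<Rightarrow> nat) \<Rightarrow> 'a::{finite,field}) \<le> k}
           \<subseteq> (\<Union>S \<in> {S. S \<subseteq> box (\<lambda>_. k) \<and> card S \<le> k \<and> rooted S}. {s. spans s S})"
proof
  fix s :: "('n \<Rightarrow> nat) \<Rightarrow> 'a"
  assume "s \<in> {s \<in> periodic_seqs T. lin_compl s \<le> k}"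
  then have s: "s \<in> periodic_seqs T" "lin_compl s \<le> k"
    by auto
  obtain S where S: "card S \<le> lin_compl s" "S \<subseteq> box (\<lambda>_. card S)" "rooted S" "spans s S"
    using exists_rooted_spanning_set[OF s(1) T] by blast
  then have "card S \<le> k"
    using s(2) by linarith
  moreover have "box (\<lambda>_. card S) \<subseteq> box (\<lambda>_::'n. k)"
    using \<open>card S \<le> k\<close> by (rule box_mono)
  then have "S \<subseteq> box (\<lambda>_. k)"
    using S(2) by (rule subset_trans[rotated])
  ultimately show "s \<in> (\<Union>S \<in> {S. S \<subseteq> box (\<lambda>_. k) \<and> card S \<le> k \<and> rooted S}. {s. spans s S})"
    using S by blast
qed

lemma card_low_complexity_le:
  fixes T :: "'n::finite \<Rightarrow> nat"
  assumes T: "\<forall>i. T i > 0"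
  shows "card {s \<in> periodic_seqs T. lin_compl (s :: ('n \<Rightarrow> nat) \<Rightarrow> 'a::{finite,field}) \<le> k}
    \<le> low_complexity_bound CARD('n) CARD('a) k"
proof -
  define \<S> where "\<S> = {S. S \<subseteq> box (\<lambda>_::'n. k) \<and> card S \<le> k \<and> rooted S}"
  define E where "E = CARD('a) ^ ((CARD('n) - 1) * k\<^sup>2 + 3 * k)"
  have sub: "\<S> \<subseteq> {S. S \<subseteq> box (\<lambda>_::'n. k) \<and> card S \<le> k}"
    unfolding \<S>_def by auto
  have fin\<S>: "finite \<S>"
    using finite_subset[OF sub card_small_subsets_box_le(1)] .
  have fin_spans: "finite {s :: ('n \<Rightarrow> nat) \<Rightarrow> 'a. spans s S}"
    and card_spans: "card {s :: ('n \<Rightarrow> nat) \<Rightarrow> 'a. spans s S} \<le> E" if "S \<in> \<S>" for S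
  proof -
    have finS: "finite S"
      using that finite_box unfolding \<S>_def by (auto intro: finite_subset)
    then show "finite {s :: ('n \<Rightarrow> nat) \<Rightarrow> 'a. spans s S}"
      by (rule card_spans_le(1))
    have "rooted S" "card S \<le> k"
      using that unfolding \<S>_def by auto
    then show "card {s :: ('n \<Rightarrow> nat) \<Rightarrow> 'a. spans s S} \<le> E"
      unfolding E_def by (rule card_spans_rooted_le[OF finS])
  qed
  have "finite (\<Union>S\<in>\<S>. {s :: ('n \<Rightarrow> nat) \<Rightarrow> 'a. spans s S})"
    using fin\<S> by (rule finite_UN_I) (rule fin_spans)
  then have "card {s \<in> periodic_seqs T. lin_compl (s :: ('n \<Rightarrow> nat) \<Rightarrow> 'a) \<le> k}
      \<le> card (\<Union>S\<in>\<S>. {s :: ('n \<Rightarrow> nat) \<Rightarrow> 'a. spans s S})"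
    using low_complexity_subset_spanned[OF T] unfolding \<S>_def by (rule card_mono)
  also have "\<dots> \<le> (\<Sum>S\<in>\<S>. card {s :: ('n \<Rightarrow> nat) \<Rightarrow> 'a. spans s S})"
    by (rule card_UN_le[OF fin\<S>])
  also have "\<dots> \<le> card \<S> * E"
    using sum_mono[of \<S>, OF card_spans] by simp
  also have "\<dots> \<le> (k + 1) ^ (CARD('n) * k + 1) * E"
    using le_trans[OF card_mono[OF card_small_subsets_box_le(1) sub] card_small_subsets_box_le(2)]
    by (rule mult_right_mono) simp
  finally show ?thesis
    unfolding E_def low_complexity_bound_def .
qed

section \<open>Asymptotics\<close>

lemma low_complexity_bound_eventually_small:
  fixes n q :: nat and e \<epsilon> :: real
  assumes q: "q \<ge> 2" and e: "e > 0" and \<epsilon>: "\<epsilon> > 0"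
  shows "\<exists>C. \<forall>N k. real N > C \<and> real k \<le> sqrt N \<and> real ((n - 1) * k\<^sup>2) \<le> (1 - e) * N \<longrightarrow>
           real (low_complexity_bound n q k) < \<epsilon> * real q ^ N"
proof -
  define L where "L = ln (real q)"
  have L: "L > 0"
    using q by (simp add: L_def)
  have "eventually (\<lambda>x. (real n * sqrt x + 1) * ln (sqrt x + 1) + 3 * L * sqrt x - e * L * x < ln \<epsilon>) at_top"
    using e L by real_asymp
  then obtain C where C: "\<And>x. x \<ge> C \<Longrightarrow>
      (real n * sqrt x + 1) * ln (sqrt x + 1) + 3 * L * sqrt x - e * L * x < ln \<epsilon>"
    by (auto simp: eventually_at_top_linorder)
  show ?thesis
  proof (intro exI[of _ C] allI impI, elim conjE)
    fix N k :: nat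
    let ?r = "sqrt (real N)"
    assume N: "real N > C" and k: "real k \<le> ?r" and kN: "real ((n - 1) * k\<^sup>2) \<le> (1 - e) * N"
    define E where "E = (n - 1) * k\<^sup>2 + 3 * k"
    have "ln (real ((k + 1) ^ (n * k + 1) * q ^ E)) = ln ((real k + 1) ^ (n * k + 1) * real q ^ E)"
      by (simp only: of_nat_mult of_nat_power of_nat_add of_nat_1)
    also have "\<dots> = real (n * k + 1) * ln (real k + 1) + real E * L"
      using q by (simp only: ln_mult ln_realpow L_def zero_less_power of_nat_less_iff) auto
    also have "\<dots> \<le> (real n * ?r + 1) * ln (?r + 1) + ((1 - e) * N + 3 * ?r) * L"
    proof (rule add_mono)
      show "real (n * k + 1) * ln (real k + 1) \<le> (real n * ?r + 1) * ln (?r + 1)"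
        using k by (intro mult_mono) (auto simp: mult_left_mono)
      show "real E * L \<le> ((1 - e) * N + 3 * ?r) * L"
        using k kN L unfolding E_def by (intro mult_right_mono) auto
    qed
    also have "\<dots> < ln \<epsilon> + N * L"
      using C[of N] N by (simp add: algebra_simps)
    also have "\<dots> = ln (\<epsilon> * real q ^ N)"
      using \<epsilon> q by (simp add: ln_mult ln_realpow L_def)
    finally have "ln (real ((k + 1) ^ (n * k + 1) * q ^ E)) < ln (\<epsilon> * real q ^ N)" .
    moreover have "0 < real ((k + 1) ^ (n * k + 1) * q ^ E)"
      using q by (simp only: of_nat_0_less_iff) simp
    moreover have "0 < \<epsilon> * real q ^ N"
      using \<epsilon> q by simp
    ultimately show "real (low_complexity_bound n q k) < \<epsilon> * real q ^ N"
      unfolding low_complexity_bound_def E_def by (simp only: ln_less_cancel_iff)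
  qed
qed

lemma nat_floor_sqrt_bounds:
  fixes d :: nat and e \<epsilon> y :: real
  assumes d: "d \<ge> 1" and e: "0 \<le> e" "e \<le> \<epsilon>" "e \<le> 1" and y: "0 \<le> y"
  defines "k \<equiv> nat \<lfloor>sqrt ((1 - \<epsilon>) * y / d)\<rfloor>"
  shows "real k \<le> sqrt y" and "real (d * k\<^sup>2) \<le> (1 - e) * y"
proof -
  (* If eps > 1 the radicand is negative, its sqrt is negative, and k = 0. *)
  define A where "A = (1 - e) * y / d"
  have A: "0 \<le> A"
    using d e y unfolding A_def by simp
  have "real k \<le> max 0 (sqrt ((1 - \<epsilon>) * y / d))"
    unfolding k_def by (cases "0 \<le> sqrt ((1 - \<epsilon>) * y / d)") (auto simp: of_nat_floor)
  also have "\<dots> \<le> sqrt A"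
    unfolding A_def using e y by (intro max.boundedI real_sqrt_le_mono divide_right_mono mult_right_mono) auto
  finally have kA: "real k \<le> sqrt A" .
  have "(1 - e) * y \<le> y"
    using e y by (intro mult_left_le_one_le) auto
  also have "y \<le> real d * y"
    using mult_right_mono[of 1 "real d" y] d y by simp
  finally have "A \<le> y"
    unfolding A_def using d by (simp add: pos_divide_le_eq mult.commute)
  then show "real k \<le> sqrt y"
    using kA real_sqrt_le_mono order_trans by blast
  have "(real k)\<^sup>2 \<le> A"
    using power_mono[OF kA, of 2] A by simp
  then show "real (d * k\<^sup>2) \<le> (1 - e) * y"
    unfolding A_def using d by (simp add: pos_le_divide_eq mult.commute)
qed

lemma low_complexity_bound_negligible:
  fixes n q :: nat and \<epsilon>1 \<epsilon> :: real
  assumes n: "n \<ge> 2" and q: "q \<ge> 2" and \<epsilon>1: "\<epsilon>1 > 0" and \<epsilon>: "\<epsilon> > 0"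
  shows "\<exists>C. \<forall>N. real N > C \<longrightarrow>
           real (low_complexity_bound n q (nat \<lfloor>sqrt ((1 - \<epsilon>1) * real N / (real n - 1))\<rfloor>))
             < \<epsilon> * real q ^ N"
proof -
  (* Capping at 1 keeps (1 - e) N nonnegative when eps1 > 1. *)
  define e where "e = min \<epsilon>1 1"
  have e: "0 < e" "e \<le> \<epsilon>1" "e \<le> 1"
    using \<epsilon>1 unfolding e_def by auto
  obtain C where C: "\<And>N k. real N > C \<Longrightarrow> real k \<le> sqrt N \<Longrightarrow> real ((n - 1) * k\<^sup>2) \<le> (1 - e) * N \<Longrightarrow>
      real (low_complexity_bound n q k) < \<epsilon> * real q ^ N"
    using low_complexity_bound_eventually_small[OF q e(1) \<epsilon>] by meson
  have d: "real n - 1 = real (n - 1)" "n - 1 \<ge> 1"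
    using n by auto
  show ?thesis
  proof (intro exI[of _ C] allI impI)
    fix N :: nat
    assume N: "real N > C"
    let ?k = "nat \<lfloor>sqrt ((1 - \<epsilon>1) * real N / (real n - 1))\<rfloor>"
    have "real ?k \<le> sqrt N" "real ((n - 1) * ?k\<^sup>2) \<le> (1 - e) * N"
      unfolding d(1) by (rule nat_floor_sqrt_bounds[OF d(2) less_imp_le[OF e(1)] e(2,3) of_nat_0_le_iff])+
    then show "real (low_complexity_bound n q ?k) < \<epsilon> * real q ^ N"
      by (rule C[OF N])
  qed
qed

lemma ratio_gt_of_complement_lt:
  assumes "finite A" and "real (card {x \<in> A. \<not> P x}) < \<epsilon> * real (card A)"
  shows "real (card {x \<in> A. P x}) / real (card A) > 1 - \<epsilon>"
proof -
  have "card {x \<in> A. P x} + card {x \<in> A. \<not> P x} = card A"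
    using assms(1) by (subst card_Un_disjoint[symmetric]) (auto intro: arg_cong[where f = card])
  moreover have "card A > 0"
    using assms(2) by (cases "card A = 0") auto
  ultimately show ?thesis
    using assms(2) by (simp add: field_simps)
qed

lemma high_complexity_ratio_gt:
  fixes T :: "'n::finite \<Rightarrow> nat"
  assumes T: "\<forall>i. T i > 0"
    and small: "real (low_complexity_bound CARD('n) CARD('a::{finite,field}) (nat \<lfloor>R\<rfloor>))
                  < \<epsilon> * real CARD('a) ^ (\<Prod>i\<in>UNIV. T i)"
  shows "real (card {s \<in> periodic_seqs T. real (lin_compl (s :: ('n \<Rightarrow> nat) \<Rightarrow> 'a)) > R})
           / real (card (periodic_seqs T :: (('n \<Rightarrow> nat) \<Rightarrow> 'a) set)) > 1 - \<epsilon>"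
proof (rule ratio_gt_of_complement_lt[OF card_periodic_seqs(1)[OF T]])
  let ?P = "periodic_seqs T :: (('n \<Rightarrow> nat) \<Rightarrow> 'a) set"
  have "{s \<in> ?P. \<not> real (lin_compl s) > R} \<subseteq> {s \<in> ?P. lin_compl s \<le> nat \<lfloor>R\<rfloor>}"
    by (auto intro: le_nat_floor)
  then have "card {s \<in> ?P. \<not> real (lin_compl s) > R} \<le> card {s \<in> ?P. lin_compl s \<le> nat \<lfloor>R\<rfloor>}"
    using card_periodic_seqs(1)[OF T] by (intro card_mono) auto
  also have "\<dots> \<le> low_complexity_bound CARD('n) CARD('a) (nat \<lfloor>R\<rfloor>)"
    by (rule card_low_complexity_le[OF T])
  finally show "real (card {s \<in> ?P. \<not> real (lin_compl s) > R}) < \<epsilon> * real (card ?P)"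
    using small unfolding card_periodic_seqs(2)[OF T] of_nat_power[of "CARD('a)"]
    by (meson of_nat_le_iff order.strict_trans1)
qed

lemma two_le_card_field: "CARD('a::{finite,field}) \<ge> 2"
  using one_less_card_field[where 'a = 'a] by simp

theorem mainTheorem4:
  assumes "CARD('n::finite) \<ge> 2"
  shows "\<forall>\<epsilon>1 \<epsilon>2. \<epsilon>1 > 0 \<and> \<epsilon>2 > 0 \<longrightarrow>
    (\<exists>C::real. \<forall>T::'n \<Rightarrow> nat. (\<forall>i. T i > 0) \<and> real (\<Prod>i\<in>UNIV. T i) > C \<longrightarrow>
       real (card {s \<in> periodic_seqs T.
                 real (lin_compl (s :: ('n \<Rightarrow> nat) \<Rightarrow> 'a::{finite,field})) >
                   sqrt ((1 - \<epsilon>1) * real (\<Prod>i\<in>UNIV. T i) / (real CARD('n) - 1))})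
       / real (card (periodic_seqs T :: (('n \<Rightarrow> nat) \<Rightarrow> 'a) set))
       > 1 - \<epsilon>2)"
proof (intro allI impI, elim conjE)
  fix \<epsilon>1 \<epsilon>2 :: real
  assume "\<epsilon>1 > 0" and "\<epsilon>2 > 0"
  then obtain C where C: "\<And>N. real N > C \<Longrightarrow>
      real (low_complexity_bound CARD('n) CARD('a) (nat \<lfloor>sqrt ((1 - \<epsilon>1) * real N / (real CARD('n) - 1))\<rfloor>))
        < \<epsilon>2 * real CARD('a) ^ N"
    using low_complexity_bound_negligible[OF assms two_le_card_field] by meson
  show "\<exists>C. \<forall>T::'n \<Rightarrow> nat. (\<forall>i. T i > 0) \<and> real (\<Prod>i\<in>UNIV. T i) > C \<longrightarrow>
      real (card {s \<in> periodic_seqs T. real (lin_compl (s :: ('n \<Rightarrow> nat) \<Rightarrow> 'a)) >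
                   sqrt ((1 - \<epsilon>1) * real (\<Prod>i\<in>UNIV. T i) / (real CARD('n) - 1))})
       / real (card (periodic_seqs T :: (('n \<Rightarrow> nat) \<Rightarrow> 'a) set)) > 1 - \<epsilon>2"
    using high_complexity_ratio_gt C by blast
qed

end
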